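(* Let $H\subseteq G$ be a Lie subgroup acting on $G$ by left translation, and suppose $\bar{\mathcal{L}}_d$ is $H$-invariant: $\bar{\mathcal{L}}_d(\triangle_a^j,hg,\xi,\eta)=\bar{\mathcal{L}}_d(\triangle_a^j,g,\xi,\eta)$ for all $h\in H$. Let $g_d$ satisfy the Lie group DCEL equations \[ \tfrac{1}{\Delta t}\big(\mu_a^j-\operatorname{Ad}^*_{\tau(\Delta t\xi_a^{j-1})}\mu_a^{j-1}\big)+\tfrac{1}{\Delta s}\big(\lambda_a^j-\operatorname{Ad}^*_{\tau(\Delta s\eta_{a-1}^j)}\lambda_{a-1}^j\big)=(g_a^j)^{-1}D_g\bar{\mathcal{L}}_a^j,\quad j=1,\dots,N-1,\ a=1,\dots,A-1. \] Then for all $0\le B<C\le A-1$, $0\le K<L\le N-1$, \begin{align*} 0=&\sum_{j=K+1}^{L}\big(\bar J^1(\triangle_B^j)+\bar J^2(\triangle_B^{j-1})+\bar J^3(\triangle_C^j)\big)+\sum_{a=B+1}^{C}\big(\bar J^1(\triangle_a^K)+\bar J^2(\triangle_a^L)+\bar J^3(\triangle_{a-1}^K)\big)\\ &+\bar J^1(\triangle_B^K)+\bar J^2(\triangle_B^L)+\bar J^3(\triangle_C^K)\quad\in\mathfrak{h}^*. \end{align*}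
   Context: Fix integers $N,A\ge 2$, nodes $(j,a)$, $0\le j\le N$, $0\le a\le A$, triangles $\triangle_a^j=((j,a),(j+1,a),(j,a+1))$ for $j\le N-1$, $a\le A-1$. $G$ is a Lie group with Lie algebra $\mathfrak{g}$; $g_d=(g_a^j)$, $g_a^j\in G$. For $\alpha\in T_g^*G$, $g^{-1}\alpha:=T_e^*L_g(\alpha)\in\mathfrak{g}^*$; $\operatorname{Ad}^*_h$ is the dual of $\operatorname{Ad}_h$. Fix a local diffeomorphism $\tau:\mathfrak{g}\to G$ near $0$ with $\tau(0)=e$, ${\rm d}^R\tau^{-1}_\xi(\eta):=T_{\tau(\xi)}\tau^{-1}(\eta\,\tau(\xi))$; $\Delta t,\Delta s>0$; $\xi_a^j=\tau^{-1}((g_a^j)^{-1}g_a^{j+1})/\Delta t$, $\eta_a^j=\tau^{-1}((g_a^j)^{-1}g_{a+1}^j)/\Delta s$. The discrete trivialized Lagrangian is smooth $\bar{\mathcal{L}}_d(\triangle_a^j,\cdot,\cdot,\cdot):G\times\mathfrak{g}\times\mathfrak{g}\to\mathbb{R}$; $\bar{\mathcal{L}}_a^j$ its value at $(g_a^j,\xi_a^j,\eta_a^j)$; $D_g,D_\xi,D_\eta$ partial derivatives; $\mu_a^j=({\rm d}^R\tau^{-1}_{\Delta t\xi_a^j})^*D_\xi\bar{\mathcal{L}}_a^j$, $\lambda_a^j=({\rm d}^R\tau^{-1}_{\Delta s\eta_a^j})^*D_\eta\bar{\mathcal{L}}_a^j$. With $i^*:\mathfrak{g}^*\to\mathfrak{h}^*$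 the dual of the inclusion $\mathfrak{h}\hookrightarrow\mathfrak{g}$, the trivialized discrete momentum maps are $\bar J^1(\triangle_a^j)=i^*\operatorname{Ad}^*_{(g_a^j)^{-1}}\big((g_a^j)^{-1}D_g\bar{\mathcal{L}}_a^j-\tfrac{1}{\Delta t}\mu_a^j-\tfrac{1}{\Delta s}\lambda_a^j\big)$, $\bar J^2(\triangle_a^j)=i^*\tfrac{1}{\Delta t}\operatorname{Ad}^*_{(g_a^j)^{-1}}\mu_a^j$, $\bar J^3(\triangle_a^j)=i^*\tfrac{1}{\Delta s}\operatorname{Ad}^*_{(g_a^j)^{-1}}\lambda_a^j$. *)

theory Defs
  imports "HOL-Analysis.Analysis"
begin

text \<open>Abstract Lie group data: a group (gmul, ge, ginv) on the type 'g, its Lie algebra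
  modelled as a finite-dimensional real vector space 'v, the exponential map and the
  adjoint representation, linked by the standard identities.\<close>

definition lie_group_str ::
  "('g \<Rightarrow> 'g \<Rightarrow> 'g) \<Rightarrow> 'g \<Rightarrow> ('g \<Rightarrow> 'g) \<Rightarrow> ('v::real_vector \<Rightarrow> 'g) \<Rightarrow> ('g \<Rightarrow> 'v \<Rightarrow> 'v) \<Rightarrow> bool"
where
  "lie_group_str gmul ge ginv gexp Ad \<longleftrightarrow>
     Groups.group gmul ge ginv \<and>
     gexp 0 = ge \<and>
     (\<forall>s t \<zeta>. gexp ((s + t) *\<^sub>R \<zeta>) = gmul (gexp (s *\<^sub>R \<zeta>)) (gexp (t *\<^sub>R \<zeta>))) \<and>
     (\<forall>x. linear (Ad x)) \<and>
     Ad ge = id \<and>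
     (\<forall>x y. Ad (gmul x y) = Ad x \<circ> Ad y) \<and>
     (\<forall>x \<zeta>. gmul (gmul x (gexp \<zeta>)) (ginv x) = gexp (Ad x \<zeta>))"

definition is_subgroup :: "('g \<Rightarrow> 'g \<Rightarrow> 'g) \<Rightarrow> 'g \<Rightarrow> ('g \<Rightarrow> 'g) \<Rightarrow> 'g set \<Rightarrow> bool" where
  "is_subgroup gmul ge ginv H \<longleftrightarrow>
     ge \<in> H \<and> (\<forall>x\<in>H. \<forall>y\<in>H. gmul x y \<in> H) \<and> (\<forall>x\<in>H. ginv x \<in> H)"

definition lie_subalg :: "('v::real_vector \<Rightarrow> 'g) \<Rightarrow> 'g set \<Rightarrow> 'v set" where
  "lie_subalg gexp H = {\<zeta>. \<forall>t::real. gexp (t *\<^sub>R \<zeta>) \<in> H}"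

definition adstar :: "('g \<Rightarrow> 'v \<Rightarrow> 'v) \<Rightarrow> 'g \<Rightarrow> ('v \<Rightarrow> real) \<Rightarrow> ('v \<Rightarrow> real)" where
  "adstar Ad h \<mu> = (\<lambda>\<zeta>. \<mu> (Ad h \<zeta>))"

text \<open>Left-trivialised derivative g^{-1} D_g f of f : G -> R at g:
  phi(zeta) = d/dt f(g gexp(t zeta)) at t = 0, phi linear.\<close>
definition has_ltriv_deriv ::
  "('g \<Rightarrow> 'g \<Rightarrow> 'g) \<Rightarrow> ('v::real_vector \<Rightarrow> 'g) \<Rightarrow> ('g \<Rightarrow> real) \<Rightarrow> 'g \<Rightarrow> ('v \<Rightarrow> real) \<Rightarrow> bool"
where
  "has_ltriv_deriv gmul gexp f x \<phi> \<longleftrightarrow>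
     linear \<phi> \<and> (\<forall>\<zeta>. ((\<lambda>t. f (gmul x (gexp (t *\<^sub>R \<zeta>)))) has_real_derivative \<phi> \<zeta>) (at 0))"

end

theory Submission
  imports Defs
begin

text \<open>For \<zeta> in the Lie algebra of H, left translation of g by exp (t \<zeta>) is right translation
  by exp (t Ad(g^-1) \<zeta>), so H-invariance makes the left-trivialised derivative of the
  Lagrangian vanish in the direction Ad(g^-1) \<zeta>; evaluated at \<zeta> this gives J1 = - J2 - J3 at
  every triangle. Pulling the DCEL equation at node (j, a) back by Ad^*((g j a)^-1), and using
  that tau (dt xi (j-1) a) is the increment (g (j-1) a)^-1 (g j a), turns it into the discrete
  conservation law (J2 j a - J2 (j-1) a) + (J3 j a - J3 j (a-1)) = 0. Summed over the interior
  nodes of the rectangle, a discrete Stokes theorem leaves exactly the boundary sum.\<close>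

lemma sum_atLeast_Suc_diff_pred:
  fixes f :: "nat \<Rightarrow> 'a::ab_group_add"
  assumes "m \<le> n"
  shows "(\<Sum>i = Suc m..n. f i - f (i - 1)) = f n - f m"
proof (cases "m = n")
  case False
  then obtain k where n: "n = Suc k" and "m \<le> k"
    using assms by (cases n) auto
  have "(\<Sum>i = Suc m..Suc k. f i - f (i - 1)) = (\<Sum>i = m..k. f (Suc i) - f i)"
    by (simp only: sum.shift_bounds_cl_Suc_ivl diff_Suc_1)
  also have "\<dots> = f (Suc k) - f m"
    using \<open>m \<le> k\<close> by (simp add: sum_Suc_diff)
  finally show ?thesis
    unfolding n .
qed simp

lemma discrete_stokes_rectangle:
  fixes P Q :: "nat \<Rightarrow> nat \<Rightarrow> 'a::ab_group_add"
  assumes "K \<le> L" "B \<le> C"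
  shows "(\<Sum>j = Suc K..L. \<Sum>a = Suc B..C. (P j a - P (j - 1) a) + (Q j a - Q j (a - 1)))
       = (\<Sum>a = Suc B..C. P L a - P K a) + (\<Sum>j = Suc K..L. Q j C - Q j B)"
proof -
  have "(\<Sum>j = Suc K..L. \<Sum>a = Suc B..C. P j a - P (j - 1) a)
      = (\<Sum>a = Suc B..C. \<Sum>j = Suc K..L. P j a - P (j - 1) a)"
    by (rule sum.swap)
  also have "\<dots> = (\<Sum>a = Suc B..C. P L a - P K a)"
    using assms(1) by (intro sum.cong refl sum_atLeast_Suc_diff_pred)
  finally have "(\<Sum>j = Suc K..L. \<Sum>a = Suc B..C. P j a - P (j - 1) a)
      = (\<Sum>a = Suc B..C. P L a - P K a)" .
  moreover have "(\<Sum>j = Suc K..L. \<Sum>a = Suc B..C. Q j a - Q j (a - 1))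
      = (\<Sum>j = Suc K..L. Q j C - Q j B)"
    using assms(2) by (intro sum.cong refl sum_atLeast_Suc_diff_pred)
  ultimately show ?thesis
    by (simp only: sum.distrib)
qed

text \<open>The terms \<open>- P - Q\<close> stand for \<open>J1\<close>, \<open>P\<close> for \<open>J2\<close> and \<open>Q\<close> for \<open>J3\<close>.\<close>

lemma boundary_sum_eq_zero_if_divergence_free:
  fixes P Q :: "nat \<Rightarrow> nat \<Rightarrow> 'a::ab_group_add"
  assumes div_free: "\<And>j a. K < j \<Longrightarrow> j \<le> L \<Longrightarrow> B < a \<Longrightarrow> a \<le> C \<Longrightarrow>
                       (P j a - P (j - 1) a) + (Q j a - Q j (a - 1)) = 0"
    and "K \<le> L" "B \<le> C"
  shows "(\<Sum>j = Suc K..L. (- P j B - Q j B) + P (j - 1) B + Q j C)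
       + (\<Sum>a = Suc B..C. (- P K a - Q K a) + P L a + Q K (a - 1))
       + (- P K B - Q K B) + P L B + Q K C = 0"
proof -
  have "(\<Sum>j = Suc K..L. \<Sum>a = Suc B..C. (P j a - P (j - 1) a) + (Q j a - Q j (a - 1))) = 0"
    by (intro sum.neutral ballI div_free) auto
  then have flux: "(\<Sum>a = Suc B..C. P L a - P K a) + (\<Sum>j = Suc K..L. Q j C - Q j B) = 0"
    using discrete_stokes_rectangle[OF assms(2,3), of P Q] by simp
  have "(\<Sum>j = Suc K..L. (- P j B - Q j B) + P (j - 1) B + Q j C)
      = (\<Sum>j = Suc K..L. Q j C - Q j B) - (\<Sum>j = Suc K..L. P j B - P (j - 1) B)"
    by (simp add: sum_subtractf[symmetric] algebra_simps)
  also have "\<dots> = (\<Sum>j = Suc K..L. Q j C - Q j B) - (P L B - P K B)"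
    using sum_atLeast_Suc_diff_pred[OF assms(2), of "\<lambda>j. P j B"] by simp
  finally have horizontal: "(\<Sum>j = Suc K..L. (- P j B - Q j B) + P (j - 1) B + Q j C)
      = (\<Sum>j = Suc K..L. Q j C - Q j B) - (P L B - P K B)" .
  have "(\<Sum>a = Suc B..C. (- P K a - Q K a) + P L a + Q K (a - 1))
      = (\<Sum>a = Suc B..C. P L a - P K a) - (\<Sum>a = Suc B..C. Q K a - Q K (a - 1))"
    by (simp add: sum_subtractf[symmetric] algebra_simps)
  also have "\<dots> = (\<Sum>a = Suc B..C. P L a - P K a) - (Q K C - Q K B)"
    using sum_atLeast_Suc_diff_pred[OF assms(3), of "Q K"] by simp
  finally have vertical: "(\<Sum>a = Suc B..C. (- P K a - Q K a) + P L a + Q K (a - 1))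
      = (\<Sum>a = Suc B..C. P L a - P K a) - (Q K C - Q K B)" .
  show ?thesis
    unfolding horizontal vertical using flux by (simp add: algebra_simps)
qed

lemma lie_group_str_Ad_Ad_inv:
  assumes "lie_group_str gmul ge ginv gexp Ad"
  shows "Ad x (Ad (ginv x) \<zeta>) = \<zeta>"
proof -
  interpret group gmul ge ginv
    using assms unfolding lie_group_str_def by blast
  have "Ad (gmul x (ginv x)) = Ad x \<circ> Ad (ginv x)" "Ad ge = id"
    using assms unfolding lie_group_str_def by blast+
  then show ?thesis
    by (metis comp_apply id_apply right_inverse)
qed

lemma lie_group_str_mult_exp_Ad_inv:
  assumes LG: "lie_group_str gmul ge ginv gexp Ad"
  shows "gmul x (gexp (Ad (ginv x) \<zeta>)) = gmul (gexp \<zeta>) x"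
proof -
  interpret group gmul ge ginv
    using LG unfolding lie_group_str_def by blast
  have "gmul (gmul x (gexp (Ad (ginv x) \<zeta>))) (ginv x) = gexp (Ad x (Ad (ginv x) \<zeta>))"
    using LG unfolding lie_group_str_def by blast
  then have "gmul (gmul x (gexp (Ad (ginv x) \<zeta>))) (ginv x) = gexp \<zeta>"
    by (simp only: lie_group_str_Ad_Ad_inv[OF LG])
  then show ?thesis
    by (metis assoc left_inverse right_neutral)
qed

lemma lie_group_str_Ad_mult_inv:
  assumes "lie_group_str gmul ge ginv gexp Ad"
  shows "Ad (gmul (ginv p) q) (Ad (ginv q) \<zeta>) = Ad (ginv p) \<zeta>"
proof -
  interpret group gmul ge ginv
    using assms unfolding lie_group_str_def by blast
  have "Ad (gmul (gmul (ginv p) q) (ginv q)) = Ad (gmul (ginv p) q) \<circ> Ad (ginv q)"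
    using assms unfolding lie_group_str_def by blast
  then show ?thesis
    by (metis assoc comp_apply right_inverse right_neutral)
qed

lemma ltriv_deriv_Ad_inv_eq_zero_if_left_invariant:
  assumes LG: "lie_group_str gmul ge ginv gexp Ad"
    and invariant: "\<forall>h\<in>H. \<forall>y. f (gmul h y) = f y"
    and \<zeta>: "\<zeta> \<in> lie_subalg gexp H"
    and deriv: "has_ltriv_deriv gmul gexp f x \<phi>"
  shows "\<phi> (Ad (ginv x) \<zeta>) = 0"
proof -
  have "t *\<^sub>R Ad (ginv x) \<zeta> = Ad (ginv x) (t *\<^sub>R \<zeta>)" for t
    using LG unfolding lie_group_str_def by (metis linear_scale)
  then have "f (gmul x (gexp (t *\<^sub>R Ad (ginv x) \<zeta>))) = f x" for t
    using lie_group_str_mult_exp_Ad_inv[OF LG] invariant \<zeta> by (simp add: lie_subalg_def)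
  moreover have "((\<lambda>t. f (gmul x (gexp (t *\<^sub>R Ad (ginv x) \<zeta>)))) has_real_derivative
      \<phi> (Ad (ginv x) \<zeta>)) (at 0)"
    using deriv by (simp add: has_ltriv_deriv_def)
  ultimately have "((\<lambda>t. f x) has_real_derivative \<phi> (Ad (ginv x) \<zeta>)) (at 0)"
    by simp
  then show ?thesis
    using DERIV_const DERIV_unique by blast
qed

lemma dcel_node_conservation:
  assumes LG: "lie_group_str gmul ge ginv gexp Ad"
    and dcel: "\<And>v. (m v - adstar Ad (gmul (ginv p) x) m' v) / dt
                   + (l v - adstar Ad (gmul (ginv q) x) l' v) / ds = \<phi> v"
    and vanish: "\<phi> (Ad (ginv x) \<zeta>) = 0"
  shows "(adstar Ad (ginv x) m \<zeta> / dt - adstar Ad (ginv p) m' \<zeta> / dt)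
       + (adstar Ad (ginv x) l \<zeta> / ds - adstar Ad (ginv q) l' \<zeta> / ds) = 0"
  using dcel[of "Ad (ginv x) \<zeta>"] vanish
  by (simp add: adstar_def lie_group_str_Ad_mult_inv[OF LG] diff_divide_distrib)

theorem mainTheorem13:
  fixes gmul :: "'g \<Rightarrow> 'g \<Rightarrow> 'g" and ge :: 'g and ginv :: "'g \<Rightarrow> 'g"
    and gexp :: "'v::euclidean_space \<Rightarrow> 'g" and Ad :: "'g \<Rightarrow> 'v \<Rightarrow> 'v"
    and H :: "'g set"
    and tau :: "'v \<Rightarrow> 'g" and tauinv :: "'g \<Rightarrow> 'v" and U :: "'v set"
    and dRtauinv :: "'v \<Rightarrow> 'v \<Rightarrow> 'v"
    and N A :: nat and dt ds :: real
    and Ld :: "nat \<Rightarrow> nat \<Rightarrow> 'g \<Rightarrow> 'v \<Rightarrow> 'v \<Rightarrow> real"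
    and DgL DxiL DetaL :: "nat \<Rightarrow> nat \<Rightarrow> 'g \<Rightarrow> 'v \<Rightarrow> 'v \<Rightarrow> 'v \<Rightarrow> real"
    and g :: "nat \<Rightarrow> nat \<Rightarrow> 'g"
    and xi eta :: "nat \<Rightarrow> nat \<Rightarrow> 'v"
    and mu lam J1 J2 J3 :: "nat \<Rightarrow> nat \<Rightarrow> 'v \<Rightarrow> real"
    and B C K L :: nat
  assumes LG: "lie_group_str gmul ge ginv gexp Ad"
    and HG: "is_subgroup gmul ge ginv H"
    and NA: "N \<ge> 2" "A \<ge> 2"
    and steps: "dt > 0" "ds > 0"
    and tau: "tau 0 = ge" "open U" "0 \<in> U" "\<forall>\<xi>\<in>U. tauinv (tau \<xi>) = \<xi>"
    and dtau: "\<forall>\<xi>\<in>U. linear (dRtauinv \<xi>) \<and> (\<forall>\<eta>.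
                 ((\<lambda>t. tauinv (gmul (gexp (t *\<^sub>R \<eta>)) (tau \<xi>))) has_vector_derivative dRtauinv \<xi> \<eta>) (at 0))"
    and Dg: "\<forall>j<N. \<forall>a<A. \<forall>x \<xi> \<eta>. has_ltriv_deriv gmul gexp (\<lambda>y. Ld j a y \<xi> \<eta>) x (DgL j a x \<xi> \<eta>)"
    and Dxi: "\<forall>j<N. \<forall>a<A. \<forall>x \<xi> \<eta>. ((\<lambda>\<zeta>. Ld j a x \<zeta> \<eta>) has_derivative DxiL j a x \<xi> \<eta>) (at \<xi>)"
    and Deta: "\<forall>j<N. \<forall>a<A. \<forall>x \<xi> \<eta>. ((\<lambda>\<zeta>. Ld j a x \<xi> \<zeta>) has_derivative DetaL j a x \<xi> \<eta>) (at \<eta>)"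
    and Hinv: "\<forall>j<N. \<forall>a<A. \<forall>h\<in>H. \<forall>x \<xi> \<eta>. Ld j a (gmul h x) \<xi> \<eta> = Ld j a x \<xi> \<eta>"
    and dom: "\<forall>j<N. \<forall>a\<le>A. gmul (ginv (g j a)) (g (Suc j) a) \<in> tau ` U"
             "\<forall>j\<le>N. \<forall>a<A. gmul (ginv (g j a)) (g j (Suc a)) \<in> tau ` U"
    and xi_def: "\<forall>j a. xi j a = (1 / dt) *\<^sub>R tauinv (gmul (ginv (g j a)) (g (Suc j) a))"
    and eta_def: "\<forall>j a. eta j a = (1 / ds) *\<^sub>R tauinv (gmul (ginv (g j a)) (g j (Suc a)))"
    and mu_def: "\<forall>j a. mu j a = (\<lambda>\<zeta>. DxiL j a (g j a) (xi j a) (eta j a) (dRtauinv (dt *\<^sub>R xi j a) \<zeta>))"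
    and lam_def: "\<forall>j a. lam j a = (\<lambda>\<zeta>. DetaL j a (g j a) (xi j a) (eta j a) (dRtauinv (ds *\<^sub>R eta j a) \<zeta>))"
    and J1_def: "\<forall>j a. J1 j a = adstar Ad (ginv (g j a))
                   (\<lambda>\<zeta>. DgL j a (g j a) (xi j a) (eta j a) \<zeta> - mu j a \<zeta> / dt - lam j a \<zeta> / ds)"
    and J2_def: "\<forall>j a. J2 j a = (\<lambda>\<zeta>. adstar Ad (ginv (g j a)) (mu j a) \<zeta> / dt)"
    and J3_def: "\<forall>j a. J3 j a = (\<lambda>\<zeta>. adstar Ad (ginv (g j a)) (lam j a) \<zeta> / ds)"
    and DCEL: "\<forall>j\<in>{1..N-1}. \<forall>a\<in>{1..A-1}. \<forall>\<zeta>.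
                 (mu j a \<zeta> - adstar Ad (tau (dt *\<^sub>R xi (j-1) a)) (mu (j-1) a) \<zeta>) / dt
               + (lam j a \<zeta> - adstar Ad (tau (ds *\<^sub>R eta j (a-1))) (lam j (a-1)) \<zeta>) / ds
               = DgL j a (g j a) (xi j a) (eta j a) \<zeta>"
    and idx: "B < C" "C \<le> A - 1" "K < L" "L \<le> N - 1"
  shows "\<forall>\<zeta>\<in>lie_subalg gexp H.
           (\<Sum>j=K+1..L. J1 j B \<zeta> + J2 (j-1) B \<zeta> + J3 j C \<zeta>)
         + (\<Sum>a=B+1..C. J1 K a \<zeta> + J2 L a \<zeta> + J3 K (a-1) \<zeta>)
         + J1 K B \<zeta> + J2 L B \<zeta> + J3 K C \<zeta> = 0"
proof
  fix \<zeta> assume \<zeta>: "\<zeta> \<in> lie_subalg gexp H"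
  have vanish: "DgL j a x \<xi> \<eta> (Ad (ginv x) \<zeta>) = 0" if "j < N" "a < A" for j a x \<xi> \<eta>
    using ltriv_deriv_Ad_inv_eq_zero_if_left_invariant[OF LG _ \<zeta>, of "\<lambda>y. Ld j a y \<xi> \<eta>"]
      Dg Hinv that by blast
  have tau_step: "tau (c *\<^sub>R ((1 / c) *\<^sub>R tauinv y)) = y" if "y \<in> tau ` U" "c > 0" for c y
    using that tau(4) by auto
  have div_free: "(J2 j a \<zeta> - J2 (j - 1) a \<zeta>) + (J3 j a \<zeta> - J3 j (a - 1) \<zeta>) = 0"
    if "K < j" "j \<le> L" "B < a" "a \<le> C" for j a
  proof -
    have j: "j \<in> {1..N-1}" "j < N" "j - 1 < N" "Suc (j - 1) = j"
      and a: "a \<in> {1..A-1}" "a < A" "a - 1 < A" "Suc (a - 1) = a"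
      using that idx NA by auto
    have "tau (dt *\<^sub>R xi (j - 1) a) = gmul (ginv (g (j - 1) a)) (g j a)"
      using tau_step[OF dom(1)[rule_format, OF j(3) less_imp_le[OF a(2)]] steps(1)] xi_def j(4) by simp
    moreover have "tau (ds *\<^sub>R eta j (a - 1)) = gmul (ginv (g j (a - 1))) (g j a)"
      using tau_step[OF dom(2)[rule_format, OF less_imp_le[OF j(2)] a(3)] steps(2)] eta_def a(4) by simp
    ultimately have dcel: "(mu j a v - adstar Ad (gmul (ginv (g (j - 1) a)) (g j a)) (mu (j - 1) a) v) / dt
        + (lam j a v - adstar Ad (gmul (ginv (g j (a - 1))) (g j a)) (lam j (a - 1)) v) / ds
        = DgL j a (g j a) (xi j a) (eta j a) v" for v
      using DCEL[rule_format, OF j(1) a(1), of v] by simp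
    show ?thesis
      using dcel_node_conservation[where m = "mu j a" and m' = "mu (j - 1) a"
          and l = "lam j a" and l' = "lam j (a - 1)"
          and \<phi> = "DgL j a (g j a) (xi j a) (eta j a)", OF LG dcel vanish[OF j(2) a(2)]]
      by (simp add: J2_def J3_def)
  qed
  have "J1 j a \<zeta> = - J2 j a \<zeta> - J3 j a \<zeta>" if "j \<le> L" "a \<le> C" for j a
    using vanish[of j a "g j a"] that idx NA
    by (simp add: J1_def J2_def J3_def adstar_def diff_divide_distrib)
  then show "(\<Sum>j=K+1..L. J1 j B \<zeta> + J2 (j-1) B \<zeta> + J3 j C \<zeta>)
      + (\<Sum>a=B+1..C. J1 K a \<zeta> + J2 L a \<zeta> + J3 K (a-1) \<zeta>)
      + J1 K B \<zeta> + J2 L B \<zeta> + J3 K C \<zeta> = 0"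
    using boundary_sum_eq_zero_if_divergence_free[of K L B C "\<lambda>j a. J2 j a \<zeta>" "\<lambda>j a. J3 j a \<zeta>",
        OF div_free] idx by simp
qed

end
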